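(* Let $n\ge 1$ and $u,v\in\mathsf{Tr}(n)$. Let $s:=\min(u_1,v_1)\cdots\min(u_n,v_n)$ and let $t$ be the word obtained from $s$ by replacing, for every pair of indices $i<j$ with $s_i=0$ and $s_j=1$, the letter $s_j$ by $0$ (i.e. changing every subword $01$ of $s$ into $00$). Then $t$ is the meet of $u$ and $v$ in $(\mathsf{Tr}(n),\preccurlyeq)$.
   Context: A triword of size $n$ is a word $u=u_1\cdots u_n$ with $u_i\in\{0,1,2\}$, $u_1\ne 2$, and such that $u_i=0$ implies $u_j\neq 1$ for all $j>i$ (i.e. no subword $01$, where a subword is obtained by deleting letters); $\mathsf{Tr}(n)$ is their set, ordered componentwise: $u\preccurlyeq v$ iff $u_i\le v_i$ for all $i\in[n]$. *)

theory Defs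
  imports Main
begin

text \<open>Words of size n are lists of naturals of length n; position i (1-based in the
paper) is list index i-1 here.\<close>

definition triword :: "nat \<Rightarrow> nat list \<Rightarrow> bool" where
  "triword n u \<longleftrightarrow> length u = n \<and> set u \<subseteq> {0,1,2} \<and> u ! 0 \<noteq> 2 \<and>
     (\<forall>i j. i < j \<and> j < n \<and> u ! i = 0 \<longrightarrow> u ! j \<noteq> 1)"

definition Tr :: "nat \<Rightarrow> nat list set" where
  "Tr n = {u. triword n u}"

definition tri_le :: "nat list \<Rightarrow> nat list \<Rightarrow> bool" where
  "tri_le u v \<longleftrightarrow> length u = length v \<and> (\<forall>i < length u. u ! i \<le> v ! i)"

definition is_meet_Tr :: "nat \<Rightarrow> nat list \<Rightarrow> nat list \<Rightarrow> nat list \<Rightarrow> bool" where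
  "is_meet_Tr n u v m \<longleftrightarrow> m \<in> Tr n \<and> tri_le m u \<and> tri_le m v \<and>
     (\<forall>w \<in> Tr n. tri_le w u \<and> tri_le w v \<longrightarrow> tri_le w m)"

end

theory Submission
  imports Defs
begin

text \<open>The componentwise minimum s of u and v is the meet of u and v among all words, and the
conditions of Tr(n) other than the absence of the subword 01 are inherited by every word below u.
So it suffices to see that the word t obtained from s by changing each subword 01 into 00 is the
largest 01-free word below s: if t_i = 0 then s already has a 0 at some position k \<le> i, so every
later 1 of s was turned into 0; and a 01-free word w \<le> s must vanish at every position where
t was lowered from 1 to 0, since it vanishes at the earlier 0 of s.\<close>

definition no_01 :: "nat list \<Rightarrow> bool" where
  "no_01 w \<longleftrightarrow> (\<forall>i j. i < j \<longrightarrow> j < length w \<longrightarrow> w ! i = 0 \<longrightarrow> w ! j \<noteq> 1)"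

definition kill_01 :: "nat list \<Rightarrow> nat list" where
  "kill_01 s = map (\<lambda>j. if s ! j = 1 \<and> (\<exists>i < j. s ! i = 0) then 0 else s ! j) [0..<length s]"

lemma triword_iff_no_01:
  "triword n u \<longleftrightarrow> length u = n \<and> set u \<subseteq> {0,1,2} \<and> u ! 0 \<noteq> 2 \<and> no_01 u"
  unfolding triword_def no_01_def by auto

lemma tri_le_trans: "tri_le u v \<Longrightarrow> tri_le v w \<Longrightarrow> tri_le u w"
  unfolding tri_le_def by (metis le_trans)

lemma tri_le_map2_min_left: "length u = length v \<Longrightarrow> tri_le (map2 min u v) u"
  by (simp add: tri_le_def)

lemma tri_le_map2_min_right: "length u = length v \<Longrightarrow> tri_le (map2 min u v) v"
  by (simp add: tri_le_def)

lemma tri_le_map2_minI: "tri_le w u \<Longrightarrow> tri_le w v \<Longrightarrow> tri_le w (map2 min u v)"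
  by (simp add: tri_le_def)

lemma triword_if_tri_le:
  assumes "tri_le w u" and "triword n u" and "no_01 w"
  shows "triword n w"
proof -
  have len: "length w = n" and u: "set u \<subseteq> {0,1,2}" "u ! 0 \<noteq> 2"
    using assms(1,2) by (auto simp: triword_iff_no_01 tri_le_def)
  have "set w \<subseteq> {0,1,2}"
  proof
    fix x assume "x \<in> set w"
    then obtain i where i: "i < length w" "x = w ! i" by (auto simp: in_set_conv_nth)
    then have "i < length u" and "w ! i \<le> u ! i" using assms(1) by (auto simp: tri_le_def)
    moreover from \<open>i < length u\<close> have "u ! i \<in> {0,1,2}" using u(1) nth_mem by blast
    ultimately show "x \<in> {0,1,2}" using i(2) by auto
  qed
  moreover have "w ! 0 \<noteq> 2"
  proof (cases "w = []")
    case True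
    \<comment> \<open>then u = [] too, so the junk values w ! 0 and u ! 0 coincide\<close>
    then show ?thesis using assms(1) u(2) by (simp add: tri_le_def)
  next
    case False
    then have "0 < length u" and "w ! 0 \<le> u ! 0" using assms(1) by (auto simp: tri_le_def)
    moreover from \<open>0 < length u\<close> have "u ! 0 \<in> {0,1,2}" using u(1) nth_mem by blast
    ultimately show ?thesis using u(2) by auto
  qed
  ultimately show ?thesis using len assms(3) by (simp add: triword_iff_no_01)
qed

lemma length_kill_01 [simp]: "length (kill_01 s) = length s"
  by (simp add: kill_01_def)

lemma nth_kill_01:
  "j < length s \<Longrightarrow> kill_01 s ! j = (if s ! j = 1 \<and> (\<exists>i < j. s ! i = 0) then 0 else s ! j)"
  by (simp add: kill_01_def)

lemma tri_le_kill_01: "tri_le (kill_01 s) s"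
  by (simp add: tri_le_def nth_kill_01)

lemma no_01_kill_01: "no_01 (kill_01 s)"
  unfolding no_01_def
proof (intro allI impI notI)
  fix i j
  assume ij: "i < j" "j < length (kill_01 s)" and ti: "kill_01 s ! i = 0"
    and tj: "kill_01 s ! j = 1"
  have "\<exists>k \<le> i. s ! k = 0"
    using ti ij nth_kill_01[of i s] by (auto split: if_splits intro: less_imp_le)
  then have "\<exists>k < j. s ! k = 0" using ij(1) by (meson le_less_trans)
  then show False using tj ij(2) nth_kill_01[of j s] by (auto split: if_splits)
qed

lemma tri_le_kill_01I:
  assumes "tri_le w s" and "no_01 w"
  shows "tri_le w (kill_01 s)"
  unfolding tri_le_def
proof (intro conjI allI impI)
  show "length w = length (kill_01 s)" using assms(1) by (simp add: tri_le_def)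
  fix j assume j: "j < length w"
  have ws: "\<And>i. i < length w \<Longrightarrow> w ! i \<le> s ! i" using assms(1) by (simp add: tri_le_def)
  show "w ! j \<le> kill_01 s ! j"
  proof (cases "s ! j = 1 \<and> (\<exists>i < j. s ! i = 0)")
    case True
    then obtain i where i: "i < j" "s ! i = 0" by blast
    then have "w ! i = 0" using ws[of i] j by simp
    then have "w ! j \<noteq> 1" using assms(2) i(1) j by (simp add: no_01_def)
    moreover have "w ! j \<le> 1" using ws[OF j] True by simp
    ultimately show ?thesis by simp
  next
    case False
    have "j < length s" using j assms(1) by (simp add: tri_le_def)
    show ?thesis unfolding nth_kill_01[OF \<open>j < length s\<close>] if_not_P[OF False] using ws[OF j] .
  qed
qed

lemma is_meet_Tr_kill_01_map2_min:
  assumes "u \<in> Tr n" and "v \<in> Tr n"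
  shows "is_meet_Tr n u v (kill_01 (map2 min u v))"
proof -
  let ?s = "map2 min u v" and ?t = "kill_01 (map2 min u v)"
  have len: "length u = n" "length v = n" using assms by (simp_all add: Tr_def triword_def)
  have t_le_u: "tri_le ?t u"
    using tri_le_kill_01 tri_le_map2_min_left len by (metis tri_le_trans)
  have t_le_v: "tri_le ?t v"
    using tri_le_kill_01 tri_le_map2_min_right len by (metis tri_le_trans)
  have "?t \<in> Tr n"
    using triword_if_tri_le[OF t_le_u] assms(1) no_01_kill_01 by (simp add: Tr_def)
  moreover have "tri_le w ?t" if "w \<in> Tr n" "tri_le w u" "tri_le w v" for w
    using that tri_le_kill_01I tri_le_map2_minI by (simp add: Tr_def triword_iff_no_01)
  ultimately show ?thesis using t_le_u t_le_v by (simp add: is_meet_Tr_def)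
qed

theorem proposition1p5:
  fixes n :: nat and u v s t :: "nat list"
  assumes "n \<ge> 1"
    and "u \<in> Tr n" and "v \<in> Tr n"
    and "s = map (\<lambda>i. min (u ! i) (v ! i)) [0..<n]"
    and "t = map (\<lambda>j. if s ! j = 1 \<and> (\<exists>i < j. s ! i = 0) then 0 else s ! j) [0..<n]"
  shows "is_meet_Tr n u v t"
proof -
  have len: "length u = n" "length v = n" using assms(2,3) by (simp_all add: Tr_def triword_def)
  then have "s = map2 min u v" using assms(4) by (simp add: list_eq_iff_nth_eq)
  moreover have "length s = n" using assms(4) by simp
  then have "t = kill_01 s" using assms(5) by (simp add: kill_01_def)
  ultimately show ?thesis using is_meet_Tr_kill_01_map2_min[OF assms(2,3)] by simp
qed

end
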